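(* Suppose there exists a $(v,k;r)$-MOHS $\{\mathcal P_1,\dots,\mathcal P_r\}$ over an abelian group $G$ of order $2v+1$ in which every block of every $\mathcal P_i$ admits an ordering $(b_0,\dots,b_{k-1})$ whose partial sums $b_0,b_0+b_1,\dots,b_0+\dots+b_{k-1}$ are pairwise distinct. Then there exist $r$ pairwise orthogonal $k$-cycle systems of order $2v+1$.
   Context: A half-set of an abelian group $G$ of odd order $2v+1\ge7$ is a subset $V\subseteq G\setminus\{0\}$ containing exactly one element of each pair $\{g,-g\}$, $g\ne0$. A $(v,k)$ Heffter system on $V$ is a partition of $V$ into blocks of size $k$ each summing to $0$ in $G$. Two Heffter systems on the same half-set are orthogonal if every block of one meets every block of the other in at most one element; a $(v,k;r)$-MOHS is a set of $r$ pairwise orthogonal $(v,k)$ Heffter systems on a common half-set. A $k$-cycle $(x_0,\dots,x_{k-1})$ on distinct vertices has edges $\{x_i,x_{i+1}\}$ (indices mod $k$). A $k$-cycle system of order $m$ is a set of $k$-cycles whose edge sets partition the edges of $K_m$; two such systems on the same vertex set are orthogonal if every cycle of one shares at most one edge with every cycle of the other. *)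

theory Defs
  imports Main
begin

definition half_set :: "'g::ab_group_add set \<Rightarrow> bool" where
  "half_set V \<longleftrightarrow> 0 \<notin> V \<and> (\<forall>g. g \<noteq> 0 \<longrightarrow> (g \<in> V \<longleftrightarrow> - g \<notin> V))"

definition heffter_system :: "nat \<Rightarrow> 'g::ab_group_add set \<Rightarrow> 'g set set \<Rightarrow> bool" where
  "heffter_system k V P \<longleftrightarrow>
     \<Union>P = V \<and> (\<forall>A\<in>P. \<forall>B\<in>P. A \<noteq> B \<longrightarrow> A \<inter> B = {}) \<and>
     (\<forall>B\<in>P. finite B \<and> card B = k \<and> \<Sum>B = 0)"

definition orthogonal_hs :: "'g set set \<Rightarrow> 'g set set \<Rightarrow> bool" where
  "orthogonal_hs P Q \<longleftrightarrow> (\<forall>A\<in>P. \<forall>B\<in>Q. card (A \<inter> B) \<le> 1)"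

definition MOHS :: "nat \<Rightarrow> nat \<Rightarrow> nat \<Rightarrow> 'g::{ab_group_add,finite} set \<Rightarrow> (nat \<Rightarrow> 'g set set) \<Rightarrow> bool" where
  "MOHS v k r V P \<longleftrightarrow> card (UNIV :: 'g set) = 2 * v + 1 \<and> half_set V \<and>
     (\<forall>i<r. heffter_system k V (P i)) \<and>
     (\<forall>i<r. \<forall>j<r. i \<noteq> j \<longrightarrow> orthogonal_hs (P i) (P j))"

definition has_distinct_partial_sums_ordering :: "'g::ab_group_add set \<Rightarrow> bool" where
  "has_distinct_partial_sums_ordering B \<longleftrightarrow>
     (\<exists>bs. distinct bs \<and> set bs = B \<and>
        distinct (map (\<lambda>j. sum_list (take (Suc j) bs)) [0..<length bs]))"

definition cycle_edges :: "'a list \<Rightarrow> 'a set set" where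
  "cycle_edges xs = {{xs ! i, xs ! ((i + 1) mod length xs)} | i. i < length xs}"

definition complete_graph_edges :: "'a set \<Rightarrow> 'a set set" where
  "complete_graph_edges W = {{x, y} | x y. x \<in> W \<and> y \<in> W \<and> x \<noteq> y}"

definition cycle_system :: "nat \<Rightarrow> 'a set \<Rightarrow> 'a list set \<Rightarrow> bool" where
  "cycle_system k W C \<longleftrightarrow>
     (\<forall>c\<in>C. length c = k \<and> distinct c \<and> set c \<subseteq> W) \<and>
     (\<forall>c\<in>C. \<forall>d\<in>C. c \<noteq> d \<longrightarrow> cycle_edges c \<inter> cycle_edges d = {}) \<and>
     \<Union>(cycle_edges ` C) = complete_graph_edges W"

definition orthogonal_cs :: "'a list set \<Rightarrow> 'a list set \<Rightarrow> bool" where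
  "orthogonal_cs C D \<longleftrightarrow> (\<forall>c\<in>C. \<forall>d\<in>D. card (cycle_edges c \<inter> cycle_edges d) \<le> 1)"

end

theory Submission
  imports Defs
begin

(* Order a zero-sum block as (b_0, ..., b_{k-1}) with pairwise distinct partial sums
   s_j = b_0 + ... + b_j.  Then (g + s_0, ..., g + s_{k-1}) is a k-cycle in G whose edges have
   the differences b_0, ..., b_{k-1}, each exactly once.  Every edge {x, y} of the complete graph
   on G has exactly one orientation with y - x in the half-set V, so the translates of these
   cycles over all blocks of one Heffter system decompose that complete graph.  An edge shared by
   cycles coming from two orthogonal Heffter systems has its difference in the intersection of
   two blocks, and the differences along one cycle are distinct, so the two cycles share at most
   one edge.  Relabelling G by {0..<2v+1} finishes the proof. *)

lemma cycle_edges_map: "cycle_edges (map f xs) = (`) f ` cycle_edges xs"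
proof -
  have "{map f xs ! i, map f xs ! (Suc i mod length xs)} = f ` {xs ! i, xs ! (Suc i mod length xs)}"
    if "i < length xs" for i
  proof -
    from that have "Suc i mod length xs < length xs" by (auto intro: mod_less_divisor)
    with that show ?thesis by simp
  qed
  then show ?thesis
    unfolding cycle_edges_def setcompr_eq_image image_image by simp
qed

lemma complete_graph_edges_image:
  assumes "inj f"
  shows "complete_graph_edges (f ` W) = (`) f ` complete_graph_edges W"
proof
  show "complete_graph_edges (f ` W) \<subseteq> (`) f ` complete_graph_edges W"
  proof
    fix e assume "e \<in> complete_graph_edges (f ` W)"
    then obtain x y where "x \<in> W" "y \<in> W" "f x \<noteq> f y" "e = f ` {x, y}"
      unfolding complete_graph_edges_def by auto
    then show "e \<in> (`) f ` complete_graph_edges W"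
      unfolding complete_graph_edges_def by blast
  qed
  show "(`) f ` complete_graph_edges W \<subseteq> complete_graph_edges (f ` W)"
  proof
    fix e assume "e \<in> (`) f ` complete_graph_edges W"
    then obtain x y where "x \<in> W" "y \<in> W" "x \<noteq> y" "e = {f x, f y}"
      unfolding complete_graph_edges_def by auto
    with assms show "e \<in> complete_graph_edges (f ` W)"
      unfolding complete_graph_edges_def by (blast dest: injD)
  qed
qed

lemma inj_image: "inj f \<Longrightarrow> inj ((`) f)"
  by (simp add: inj_def inj_image_eq_iff)

lemma cycle_edges_map_Int:
  "inj f \<Longrightarrow> cycle_edges (map f c) \<inter> cycle_edges (map f d) = (`) f ` (cycle_edges c \<inter> cycle_edges d)"
  by (simp add: cycle_edges_map image_Int inj_image)

lemma cycle_system_image: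
  assumes "inj f" "cycle_system k W C"
  shows "cycle_system k (f ` W) (map f ` C)"
proof -
  have "\<forall>c'\<in>map f ` C. length c' = k \<and> distinct c' \<and> set c' \<subseteq> f ` W"
    using assms unfolding cycle_system_def by (fastforce simp: distinct_map inj_on_subset)
  moreover have "\<forall>c'\<in>map f ` C. \<forall>d'\<in>map f ` C. c' \<noteq> d' \<longrightarrow> cycle_edges c' \<inter> cycle_edges d' = {}"
    using assms unfolding cycle_system_def by (auto simp: cycle_edges_map_Int[OF assms(1)])
  moreover have "\<Union>(cycle_edges ` map f ` C) = (`) f ` \<Union>(cycle_edges ` C)"
    by (auto simp: cycle_edges_map)
  ultimately show ?thesis
    using assms unfolding cycle_system_def by (simp add: complete_graph_edges_image)
qed

lemma orthogonal_cs_image: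
  assumes "inj f" "orthogonal_cs C D"
  shows "orthogonal_cs (map f ` C) (map f ` D)"
  unfolding orthogonal_cs_def
proof (intro ballI)
  fix c' d' assume "c' \<in> map f ` C" "d' \<in> map f ` D"
  then obtain c d where cd: "c \<in> C" "d \<in> D" "c' = map f c" "d' = map f d" by blast
  have "card (cycle_edges c' \<inter> cycle_edges d') = card (cycle_edges c \<inter> cycle_edges d)"
    using cd inj_image[OF assms(1)]
    by (simp add: cycle_edges_map_Int[OF assms(1)] card_image inj_on_subset)
  with assms(2) cd show "card (cycle_edges c' \<inter> cycle_edges d') \<le> 1"
    unfolding orthogonal_cs_def by simp
qed

lemma image_Suc_mod_lessThan: "(\<lambda>i. Suc i mod n) ` {..<n} = {..<n}"
proof
  show "(\<lambda>i. Suc i mod n) ` {..<n} \<subseteq> {..<n}" by auto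
  show "{..<n} \<subseteq> (\<lambda>i. Suc i mod n) ` {..<n}"
  proof
    fix j assume j: "j \<in> {..<n}"
    show "j \<in> (\<lambda>i. Suc i mod n) ` {..<n}"
    proof (cases j)
      case 0
      with j have "j = Suc (n - 1) mod n" "n - 1 < n" by auto
      then show ?thesis by blast
    next
      case (Suc i)
      with j have "j = Suc i mod n" "i < n" by auto
      then show ?thesis by blast
    qed
  qed
qed

definition partial_sums :: "'a::monoid_add list \<Rightarrow> 'a list" where
  "partial_sums bs = map (\<lambda>j. sum_list (take (Suc j) bs)) [0..<length bs]"

definition partial_sum_cycle :: "'g::ab_group_add list \<Rightarrow> 'g \<Rightarrow> 'g list" where
  "partial_sum_cycle bs g = map ((+) g) (partial_sums bs)"

lemma length_partial_sum_cycle [simp]: "length (partial_sum_cycle bs g) = length bs"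
  by (simp add: partial_sum_cycle_def partial_sums_def)

lemma nth_partial_sum_cycle:
  "j < length bs \<Longrightarrow> partial_sum_cycle bs g ! j = g + sum_list (take (Suc j) bs)"
  by (simp add: partial_sum_cycle_def partial_sums_def)

lemma distinct_partial_sum_cycle:
  "distinct (partial_sums bs) \<Longrightarrow> distinct (partial_sum_cycle bs g)"
  by (simp add: partial_sum_cycle_def distinct_map)

(* Edge j joins the vertices before and after adding b_j; for j = 0 this is the closing edge,
   since the last vertex is g + sum_list bs = g. *)
lemma cycle_edges_partial_sum_cycle:
  fixes bs :: "'g::ab_group_add list"
  assumes "sum_list bs = 0"
  shows "cycle_edges (partial_sum_cycle bs g) =
    (\<lambda>j. {g + sum_list (take j bs), g + sum_list (take j bs) + bs ! j}) ` {..<length bs}"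
    (is "_ = ?E ` _")
proof -
  let ?c = "partial_sum_cycle bs g" and ?n = "length bs"
  have "{?c ! i, ?c ! (Suc i mod ?n)} = ?E (Suc i mod ?n)" if "i < ?n" for i
  proof (cases "Suc i < ?n")
    case True
    then show ?thesis
      by (simp add: nth_partial_sum_cycle take_Suc_conv_app_nth algebra_simps)
  next
    case False
    with that have "?n = Suc i" by simp
    with assms show ?thesis
      by (simp add: nth_partial_sum_cycle take_Suc_conv_app_nth insert_commute)
  qed
  then have "cycle_edges ?c = (?E \<circ> (\<lambda>i. Suc i mod ?n)) ` {..<?n}"
    unfolding cycle_edges_def by (auto simp: image_iff)
  also have "\<dots> = ?E ` {..<?n}"
    by (simp only: image_comp[symmetric] image_Suc_mod_lessThan)
  finally show ?thesis .
qed

definition distinct_partial_sums_ordering :: "'g::ab_group_add set \<Rightarrow> 'g list \<Rightarrow> bool" where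
  "distinct_partial_sums_ordering B bs \<longleftrightarrow> distinct bs \<and> set bs = B \<and> distinct (partial_sums bs)"

lemma has_distinct_partial_sums_ordering_iff:
  "has_distinct_partial_sums_ordering B \<longleftrightarrow> (\<exists>bs. distinct_partial_sums_ordering B bs)"
  unfolding has_distinct_partial_sums_ordering_def distinct_partial_sums_ordering_def partial_sums_def ..

lemma half_set_nonzero: "half_set V \<Longrightarrow> b \<in> V \<Longrightarrow> b \<noteq> 0"
  unfolding half_set_def by blast

lemma half_set_uminus_notin: "half_set V \<Longrightarrow> b \<in> V \<Longrightarrow> - b \<notin> V"
  unfolding half_set_def by metis

lemma half_set_uminus_in: "half_set V \<Longrightarrow> d \<noteq> 0 \<Longrightarrow> d \<notin> V \<Longrightarrow> - d \<in> V"
  unfolding half_set_def by metis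

lemma half_set_doubleton_eq_iff:
  fixes x y x' y' :: "'g::ab_group_add"
  assumes "half_set V" "y - x \<in> V" "y' - x' \<in> V"
  shows "{x, y} = {x', y'} \<longleftrightarrow> x = x' \<and> y = y'"
proof -
  have "\<not> (x = y' \<and> y = x')"
    using half_set_uminus_notin[OF assms(1,3)] assms(2) by (metis minus_diff_eq)
  then show ?thesis by (metis doubleton_eq_iff)
qed

definition edge_label :: "'g::ab_group_add set \<Rightarrow> 'g set \<Rightarrow> 'g" where
  "edge_label V e = (THE b. b \<in> V \<and> (\<exists>x y. e = {x, y} \<and> b = y - x))"

lemma edge_label_eq:
  assumes "half_set V" "y - x \<in> V"
  shows "edge_label V {x, y} = y - x"
  unfolding edge_label_def
proof (rule the_equality)
  fix b assume "b \<in> V \<and> (\<exists>x' y'. {x, y} = {x', y'} \<and> b = y' - x')"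
  then obtain x' y' where "b \<in> V" "{x, y} = {x', y'}" "b = y' - x'" by blast
  with half_set_doubleton_eq_iff[OF assms, where x' = x' and y' = y'] show "b = y - x" by simp
qed (use assms in blast)

lemma mem_cycle_edges_partial_sum_cycle:
  assumes "half_set V" "set bs \<subseteq> V" "sum_list bs = 0" "y - x \<in> V"
  shows "{x, y} \<in> cycle_edges (partial_sum_cycle bs g) \<longleftrightarrow>
    (\<exists>j<length bs. bs ! j = y - x \<and> x = g + sum_list (take j bs))"
proof -
  have "{x, y} = {g + sum_list (take j bs), g + sum_list (take j bs) + bs ! j} \<longleftrightarrow>
      bs ! j = y - x \<and> x = g + sum_list (take j bs)" if "j < length bs" for j
  proof -
    have "bs ! j \<in> V" using that assms(2) by auto
    then show ?thesis
      using half_set_doubleton_eq_iff[OF assms(1,4),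
          where x' = "g + sum_list (take j bs)" and y' = "g + sum_list (take j bs) + bs ! j"]
      by auto
  qed
  then show ?thesis by (auto simp: cycle_edges_partial_sum_cycle[OF assms(3)])
qed

lemma cycle_edges_partial_sum_cycle_oriented:
  assumes "sum_list bs = 0" "e \<in> cycle_edges (partial_sum_cycle bs g)"
  obtains x y where "e = {x, y}" "y - x \<in> set bs"
  using assms by (auto simp: cycle_edges_partial_sum_cycle)

lemma edge_label_partial_sum_cycle:
  assumes "half_set V" "set bs \<subseteq> V" "sum_list bs = 0"
    "e \<in> cycle_edges (partial_sum_cycle bs g)"
  shows "edge_label V e \<in> set bs"
proof -
  obtain x y where "e = {x, y}" "y - x \<in> set bs"
    using cycle_edges_partial_sum_cycle_oriented[OF assms(3,4)] .
  with assms(1,2) show ?thesis by (auto simp: edge_label_eq)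
qed

lemma inj_on_edge_label_partial_sum_cycle:
  assumes "half_set V" "set bs \<subseteq> V" "sum_list bs = 0" "distinct bs"
  shows "inj_on (edge_label V) (cycle_edges (partial_sum_cycle bs g))"
proof (rule inj_onI)
  fix e e' assume e: "e \<in> cycle_edges (partial_sum_cycle bs g)"
    and e': "e' \<in> cycle_edges (partial_sum_cycle bs g)"
    and label: "edge_label V e = edge_label V e'"
  obtain x y where xy: "e = {x, y}" "y - x \<in> V"
    using cycle_edges_partial_sum_cycle_oriented[OF assms(3) e] assms(2) by (metis subsetD)
  obtain x' y' where xy': "e' = {x', y'}" "y' - x' \<in> V"
    using cycle_edges_partial_sum_cycle_oriented[OF assms(3) e'] assms(2) by (metis subsetD)
  have diff: "y - x = y' - x'"
    using label xy xy' by (simp add: edge_label_eq[OF assms(1)])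
  obtain i where i: "i < length bs" "bs ! i = y - x" "x = g + sum_list (take i bs)"
    using e mem_cycle_edges_partial_sum_cycle[OF assms(1-3) xy(2)] unfolding xy(1) by blast
  obtain j where j: "j < length bs" "bs ! j = y' - x'" "x' = g + sum_list (take j bs)"
    using e' mem_cycle_edges_partial_sum_cycle[OF assms(1-3) xy'(2)] unfolding xy'(1) by blast
  have "bs ! i = bs ! j" using i(2) j(2) diff by simp
  with assms(4) i(1) j(1) have "i = j" by (simp add: nth_eq_iff_index_eq)
  with i(3) j(3) diff have "x = x'" "y = y'" by (simp_all add: eq_diff_eq)
  with xy xy' show "e = e'" by simp
qed

lemma partial_sum_cycle_translate_unique:
  assumes "half_set V" "set bs \<subseteq> V" "sum_list bs = 0" "distinct bs"
    and "e \<in> cycle_edges (partial_sum_cycle bs g)" "e \<in> cycle_edges (partial_sum_cycle bs h)"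
  shows "g = h"
proof -
  obtain x y where xy: "e = {x, y}" "y - x \<in> V"
    using cycle_edges_partial_sum_cycle_oriented[OF assms(3,5)] assms(2) by (metis subsetD)
  obtain i where i: "i < length bs" "bs ! i = y - x" "x = g + sum_list (take i bs)"
    using assms(5) mem_cycle_edges_partial_sum_cycle[OF assms(1-3) xy(2)] unfolding xy(1) by blast
  obtain j where j: "j < length bs" "bs ! j = y - x" "x = h + sum_list (take j bs)"
    using assms(6) mem_cycle_edges_partial_sum_cycle[OF assms(1-3) xy(2)] unfolding xy(1) by blast
  have "i = j" using assms(4) i(1,2) j(1,2) by (metis nth_eq_iff_index_eq)
  with i(3) j(3) show "g = h" by simp
qed

lemma partial_sum_cycle_covers:
  assumes "half_set V" "set bs \<subseteq> V" "sum_list bs = 0" "y - x \<in> set bs"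
  shows "\<exists>g. {x, y} \<in> cycle_edges (partial_sum_cycle bs g)"
proof -
  obtain j where j: "j < length bs" "bs ! j = y - x"
    using assms(4) by (metis in_set_conv_nth)
  have "y - x \<in> V" using assms(2,4) by blast
  with j have "{x, y} \<in> cycle_edges (partial_sum_cycle bs (x - sum_list (take j bs)))"
    by (auto simp: mem_cycle_edges_partial_sum_cycle[OF assms(1-3)])
  then show ?thesis ..
qed

lemma cycle_edges_partial_sum_cycle_subset:
  assumes "half_set V" "set bs \<subseteq> V" "sum_list bs = 0"
  shows "cycle_edges (partial_sum_cycle bs g) \<subseteq> complete_graph_edges UNIV"
proof
  fix e assume "e \<in> cycle_edges (partial_sum_cycle bs g)"
  then obtain x y where "e = {x, y}" "y - x \<in> V"
    using cycle_edges_partial_sum_cycle_oriented[OF assms(3)] assms(2) by (metis subsetD)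
  with half_set_nonzero[OF assms(1)] show "e \<in> complete_graph_edges UNIV"
    unfolding complete_graph_edges_def by force
qed

lemma heffter_system_block_list:
  assumes "heffter_system k V P" "B \<in> P" "distinct bs" "set bs = B"
  shows "set bs \<subseteq> V" "sum_list bs = 0" "length bs = k"
proof -
  from assms(1,2,4) have "set bs \<subseteq> V" "card (set bs) = k" "\<Sum>(set bs) = 0"
    unfolding heffter_system_def by blast+
  with assms(3) show "set bs \<subseteq> V" "sum_list bs = 0" "length bs = k"
    by (simp_all add: distinct_sum_list_conv_Sum distinct_card)
qed

definition heffter_cycles :: "('g::ab_group_add set \<Rightarrow> 'g list) \<Rightarrow> 'g set set \<Rightarrow> 'g list set" where
  "heffter_cycles ord P = (\<Union>B\<in>P. range (partial_sum_cycle (ord B)))"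

lemma heffter_cycles_edge_disjoint:
  assumes hs: "half_set V" and P: "heffter_system k V P"
    and ord: "\<forall>B\<in>P. distinct (ord B) \<and> set (ord B) = B"
    and cd: "c \<in> heffter_cycles ord P" "d \<in> heffter_cycles ord P"
    and e: "e \<in> cycle_edges c" "e \<in> cycle_edges d"
  shows "c = d"
proof -
  obtain A g B h where AB: "A \<in> P" "B \<in> P"
    and c: "c = partial_sum_cycle (ord A) g" and d: "d = partial_sum_cycle (ord B) h"
    using cd unfolding heffter_cycles_def by blast
  have ordAB: "distinct (ord A)" "set (ord A) = A" "distinct (ord B)" "set (ord B) = B"
    using ord AB by auto
  note blockA = heffter_system_block_list[OF P AB(1) ordAB(1,2)]
  note blockB = heffter_system_block_list[OF P AB(2) ordAB(3,4)]
  have "edge_label V e \<in> A" "edge_label V e \<in> B"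
    using edge_label_partial_sum_cycle[OF hs blockA(1,2) e(1)[unfolded c]]
      edge_label_partial_sum_cycle[OF hs blockB(1,2) e(2)[unfolded d]]
    by (simp_all only: ordAB)
  with P AB have "A = B" unfolding heffter_system_def by blast
  have "g = h"
    using partial_sum_cycle_translate_unique[OF hs blockB(1,2) ordAB(3)
        e(1)[unfolded c \<open>A = B\<close>] e(2)[unfolded d]] .
  with \<open>A = B\<close> c d show "c = d" by simp
qed

lemma cycle_edges_heffter_cycles:
  fixes V :: "'g::ab_group_add set"
  assumes hs: "half_set V" and P: "heffter_system k V P"
    and ord: "\<forall>B\<in>P. distinct (ord B) \<and> set (ord B) = B"
  shows "\<Union>(cycle_edges ` heffter_cycles ord P) = complete_graph_edges UNIV"
proof
  have block: "set (ord B) \<subseteq> V" "sum_list (ord B) = 0" if "B \<in> P" for B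
    using heffter_system_block_list[OF P that, where bs = "ord B"] ord that by auto
  show "\<Union>(cycle_edges ` heffter_cycles ord P) \<subseteq> complete_graph_edges UNIV"
    unfolding heffter_cycles_def
    using cycle_edges_partial_sum_cycle_subset[OF hs block] by auto
  have covered: "{x, y} \<in> \<Union>(cycle_edges ` heffter_cycles ord P)" if "y - x \<in> V" for x y
  proof -
    from P have "\<Union>P = V" by (simp add: heffter_system_def)
    with that ord obtain B where B: "B \<in> P" "y - x \<in> set (ord B)" by auto
    obtain g where "{x, y} \<in> cycle_edges (partial_sum_cycle (ord B) g)"
      using partial_sum_cycle_covers[OF hs block[OF B(1)] B(2)] ..
    with B(1) show ?thesis unfolding heffter_cycles_def by blast
  qed
  show "complete_graph_edges UNIV \<subseteq> \<Union>(cycle_edges ` heffter_cycles ord P)"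
  proof
    fix e assume "e \<in> complete_graph_edges (UNIV :: 'g set)"
    then obtain x y :: 'g where e: "e = {x, y}" "y - x \<noteq> 0"
      unfolding complete_graph_edges_def by auto
    show "e \<in> \<Union>(cycle_edges ` heffter_cycles ord P)"
    proof (cases "y - x \<in> V")
      case True
      with covered e(1) show ?thesis by simp
    next
      case False
      with half_set_uminus_in[OF hs e(2)] have "x - y \<in> V" by simp
      then have "{y, x} \<in> \<Union>(cycle_edges ` heffter_cycles ord P)" by (rule covered)
      with e(1) show ?thesis by (simp add: insert_commute)
    qed
  qed
qed

lemma cycle_system_heffter_cycles:
  assumes hs: "half_set V" and P: "heffter_system k V P"
    and ord: "\<forall>B\<in>P. distinct_partial_sums_ordering B (ord B)"
  shows "cycle_system k UNIV (heffter_cycles ord P)"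
proof -
  have ord': "\<forall>B\<in>P. distinct (ord B) \<and> set (ord B) = B"
    using ord unfolding distinct_partial_sums_ordering_def by blast
  have "length (partial_sum_cycle (ord B) g) = k" "distinct (partial_sum_cycle (ord B) g)"
    if "B \<in> P" for B g
    using heffter_system_block_list[OF P that, where bs = "ord B"] ord that
    by (auto simp: distinct_partial_sums_ordering_def distinct_partial_sum_cycle)
  then have "\<forall>c\<in>heffter_cycles ord P. length c = k \<and> distinct c \<and> set c \<subseteq> UNIV"
    unfolding heffter_cycles_def by blast
  with heffter_cycles_edge_disjoint[OF hs P ord'] cycle_edges_heffter_cycles[OF hs P ord']
  show ?thesis unfolding cycle_system_def by blast
qed

lemma orthogonal_cs_heffter_cycles:
  assumes hs: "half_set V" and P: "heffter_system k V P" and Q: "heffter_system k V Q"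
    and ord: "\<forall>B\<in>P \<union> Q. distinct (ord B) \<and> set (ord B) = B"
    and PQ: "orthogonal_hs P Q"
  shows "orthogonal_cs (heffter_cycles ord P) (heffter_cycles ord Q)"
  unfolding orthogonal_cs_def
proof (intro ballI)
  fix c d assume "c \<in> heffter_cycles ord P" "d \<in> heffter_cycles ord Q"
  then obtain A g B h where A: "A \<in> P" "c = partial_sum_cycle (ord A) g"
    and B: "B \<in> Q" "d = partial_sum_cycle (ord B) h"
    unfolding heffter_cycles_def by blast
  have ordA: "distinct (ord A)" "set (ord A) = A" and ordB: "distinct (ord B)" "set (ord B) = B"
    using ord A(1) B(1) by auto
  note blockA = heffter_system_block_list[OF P A(1) ordA]
  note blockB = heffter_system_block_list[OF Q B(1) ordB]
  let ?E = "cycle_edges c \<inter> cycle_edges d"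
  have "inj_on (edge_label V) ?E"
    using inj_on_edge_label_partial_sum_cycle[OF hs blockA(1,2) ordA(1)] A(2) by (blast intro: inj_on_subset)
  then have "card ?E = card (edge_label V ` ?E)" by (simp add: card_image)
  also have "\<dots> \<le> card (A \<inter> B)"
  proof (rule card_mono)
    show "edge_label V ` ?E \<subseteq> A \<inter> B"
      using edge_label_partial_sum_cycle[OF hs blockA(1,2)] edge_label_partial_sum_cycle[OF hs blockB(1,2)]
        A(2) B(2) ordA(2) ordB(2) by blast
  qed (use P A(1) in \<open>auto simp: heffter_system_def\<close>)
  also have "\<dots> \<le> 1" using PQ A(1) B(1) unfolding orthogonal_hs_def by blast
  finally show "card ?E \<le> 1" .
qed

lemma orthogonal_cycle_systems_relabel_nat:
  fixes C :: "nat \<Rightarrow> 'a::finite list set"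
  assumes cs: "\<forall>i<r. cycle_system k UNIV (C i)"
    and orth: "\<forall>i<r. \<forall>j<r. i \<noteq> j \<longrightarrow> orthogonal_cs (C i) (C j)"
  shows "\<exists>C' :: nat \<Rightarrow> nat list set.
           (\<forall>i<r. cycle_system k {0..<card (UNIV :: 'a set)} (C' i)) \<and>
           (\<forall>i<r. \<forall>j<r. i \<noteq> j \<longrightarrow> orthogonal_cs (C' i) (C' j))"
proof -
  obtain \<phi> :: "'a \<Rightarrow> nat" where "bij_betw \<phi> UNIV {0..<card (UNIV :: 'a set)}"
    using ex_bij_betw_finite_nat[of "UNIV :: 'a set"] by auto
  then have \<phi>: "inj \<phi>" "range \<phi> = {0..<card (UNIV :: 'a set)}" unfolding bij_betw_def by auto
  have "cycle_system k {0..<card (UNIV :: 'a set)} (map \<phi> ` C i)" if "i < r" for i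
    using cycle_system_image[OF \<phi>(1) cs[rule_format, OF that]] by (simp only: \<phi>(2))
  moreover have "orthogonal_cs (map \<phi> ` C i) (map \<phi> ` C j)" if "i < r" "j < r" "i \<noteq> j" for i j
    using orthogonal_cs_image[OF \<phi>(1) orth[rule_format, OF that]] .
  ultimately show ?thesis by (intro exI[of _ "\<lambda>i. map \<phi> ` C i"]) blast
qed

theorem proposition6p4:
  fixes v k r :: nat and V :: "'g::{ab_group_add,finite} set" and P :: "nat \<Rightarrow> 'g set set"
  assumes "v \<ge> 3"
    and "MOHS v k r V P"
    and "\<forall>i<r. \<forall>B\<in>P i. has_distinct_partial_sums_ordering B"
  shows "\<exists>C :: nat \<Rightarrow> nat list set.
           (\<forall>i<r. cycle_system k {0..<2 * v + 1} (C i)) \<and>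
           (\<forall>i<r. \<forall>j<r. i \<noteq> j \<longrightarrow> orthogonal_cs (C i) (C j))"
proof -
  have card: "card (UNIV :: 'g set) = 2 * v + 1" and hs: "half_set V"
    and P: "\<forall>i<r. heffter_system k V (P i)"
    and orth: "\<forall>i<r. \<forall>j<r. i \<noteq> j \<longrightarrow> orthogonal_hs (P i) (P j)"
    using assms(2) unfolding MOHS_def by blast+
  have "\<forall>B\<in>(\<Union>i<r. P i). \<exists>bs. distinct_partial_sums_ordering B bs"
    using assms(3) by (auto simp: has_distinct_partial_sums_ordering_iff)
  from bchoice[OF this] obtain ord
    where ord: "\<forall>B\<in>(\<Union>i<r. P i). distinct_partial_sums_ordering B (ord B)" ..
  have "cycle_system k UNIV (heffter_cycles ord (P i))" if "i < r" for i
    using cycle_system_heffter_cycles[OF hs P[rule_format, OF that]] ord that by blast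
  moreover have "orthogonal_cs (heffter_cycles ord (P i)) (heffter_cycles ord (P j))"
    if "i < r" "j < r" "i \<noteq> j" for i j
  proof (rule orthogonal_cs_heffter_cycles[OF hs P[rule_format, OF that(1)]
        P[rule_format, OF that(2)] _ orth[rule_format, OF that]])
    show "\<forall>B\<in>P i \<union> P j. distinct (ord B) \<and> set (ord B) = B"
      using ord that(1,2) unfolding distinct_partial_sums_ordering_def by blast
  qed
  ultimately show ?thesis
    using orthogonal_cycle_systems_relabel_nat[of r k "\<lambda>i. heffter_cycles ord (P i)"]
    by (simp only: card) blast
qed

end
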